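(* For integers $i\ge0$, $j\ge0$ and real $k$: (a) $b_{i,j+1,k}=\sum_{r=0}^{i-1}\binom{i}{r}b_{r,j,k}$; (b) $b_{i,j,k+1}=\sum_{r=0}^{i}\binom{i}{r}b_{r,j,k}$; (c) $b_{i+1,j+1,k}=(j+1)\sum_{r=0}^{i}\binom{i}{r}b_{r,j,k}+k\,b_{i,j+1,k}$; (d) $b_{i+1,j+1,k}=(j+1)\sum_{r=j}^{i}b_{r,j,k}\,(j+k+1)^{i-r}$; (e) $b_{i+1,j+1,k}=(j+1)\sum_{r=j}^{i}b_{r,j,k+1}\,k^{i-r}$.
   Context: For integers $i\ge0$, $j\ge0$ and real $k$, $b_{i,j,k}=\sum_{r=0}^{j}\binom{j}{r}(-1)^{j-r}(r+k)^i$, with the convention $0^0=1$ (used throughout, also in the powers appearing in (d) and (e)). *)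

theory Defs
  imports Complex_Main
begin

text \<open>b i j k = sum over r from 0 to j of (j choose r) (-1)^(j-r) (r+k)^i.
  Note that in Isabelle, x ^ 0 = 1 for every x, including x = 0, so the convention 0^0 = 1 holds.\<close>
definition b :: "nat \<Rightarrow> nat \<Rightarrow> real \<Rightarrow> real" where
  "b i j k = (\<Sum>r = 0..j. real (j choose r) * (-1) ^ (j - r) * (real r + k) ^ i)"

end

theory Submission
  imports Defs
begin

text \<open>The number \<open>b i j k\<close> is the \<open>j\<close>-th forward difference of \<open>x\<^sup>i\<close> taken at \<open>x = k\<close>.
  Pascal's rule gives \<open>\<Delta>\<^sup>j\<^sup>+\<^sup>1 = \<Delta> \<Delta>\<^sup>j\<close>, and the binomial expansion of \<open>(x + 1)\<^sup>i\<close> gives (b);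
  together they give (a) and, by induction on \<open>j\<close>, the vanishing of \<open>b i j k\<close> for \<open>i < j\<close>.
  Writing \<open>x\<^sup>i\<^sup>+\<^sup>1 = x \<cdot> x\<^sup>i\<close> and using \<open>r \<cdot> C(j+1, r) = (j+1) \<cdot> C(j, r-1)\<close> gives (c).
  Read as first-order linear recurrences in \<open>i\<close> (once as it stands, once after replacing
  \<open>b i j (k + 1)\<close> by \<open>b i (j + 1) k + b i j k\<close>), (c) unrolls to (e) and (d), where the
  terms with \<open>r < j\<close> vanish.\<close>

lemma sum_choose_Suc_Pascal:
  fixes g :: "nat \<Rightarrow> 'a :: comm_semiring_1"
  shows "(\<Sum>r = 0..Suc j. of_nat (Suc j choose r) * g r)
       = (\<Sum>r = 0..j. of_nat (j choose r) * (g r + g (Suc r)))"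
proof -
  have "(\<Sum>r = 0..j. of_nat (j choose r) * g r) = (\<Sum>r = 0..Suc j. of_nat (j choose r) * g r)"
    by (simp add: binomial_eq_0)
  also have "\<dots> = g 0 + (\<Sum>r = 0..j. of_nat (j choose Suc r) * g (Suc r))"
    unfolding sum.atLeast0_atMost_Suc_shift by simp
  finally show ?thesis
    by (subst sum.atLeast0_atMost_Suc_shift) (simp add: algebra_simps sum.distrib)
qed

lemma sum_from_linear_recurrence:
  fixes B a :: "nat \<Rightarrow> 'a :: comm_semiring_1"
  assumes "B 0 = 0" and "\<And>n. B (Suc n) = c * B n + a n"
  shows "B (Suc n) = (\<Sum>r = 0..n. a r * c ^ (n - r))"
proof (induction n)
  case 0
  then show ?case using assms by simp
next
  case (Suc n)
  have "B (Suc (Suc n)) = (\<Sum>r = 0..n. a r * (c * c ^ (n - r))) + a (Suc n)"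
    using assms(2) Suc by (simp add: sum_distrib_left algebra_simps)
  also have "\<dots> = (\<Sum>r = 0..n. a r * c ^ (Suc n - r)) + a (Suc n)"
    by (intro arg_cong2[where f = "(+)"] sum.cong) (simp_all add: Suc_diff_le)
  finally show ?case by simp
qed

lemma sum_atLeast0_atMost_eq_from:
  fixes f :: "nat \<Rightarrow> 'a :: comm_monoid_add"
  assumes "\<And>r. r < j \<Longrightarrow> f r = 0"
  shows "(\<Sum>r = 0..i. f r) = (\<Sum>r = j..i. f r)"
  using assms by (intro sum.mono_neutral_right) auto

lemma b_Suc_right: "b i (Suc j) k = b i j (k + 1) - b i j k"
proof -
  have "b i (Suc j) k = (\<Sum>r = 0..j. real (j choose r) *
      ((-1) ^ (Suc j - r) * (real r + k) ^ i + (-1) ^ (j - r) * (real (Suc r) + k) ^ i))"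
    unfolding b_def using sum_choose_Suc_Pascal[of j "\<lambda>r. (-1) ^ (Suc j - r) * (real r + k) ^ i"]
    by (simp add: mult.assoc)
  also have "\<dots> = (\<Sum>r = 0..j. real (j choose r) * (-1) ^ (j - r) * (real r + (k + 1)) ^ i)
                - (\<Sum>r = 0..j. real (j choose r) * (-1) ^ (j - r) * (real r + k) ^ i)"
    unfolding sum_subtractf[symmetric]
    by (intro sum.cong) (auto simp: Suc_diff_le algebra_simps)
  finally show ?thesis
    unfolding b_def .
qed

lemma b_add_1: "b i j (k + 1) = (\<Sum>r = 0..i. real (i choose r) * b r j k)"
proof -
  have "b i j (k + 1) = (\<Sum>s = 0..j. real (j choose s) * (-1) ^ (j - s) *
         (\<Sum>r = 0..i. real (i choose r) * (real s + k) ^ r))"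
    unfolding b_def
    by (intro sum.cong) (simp_all add: binomial_ring atLeast0AtMost add.assoc[symmetric])
  also have "\<dots> = (\<Sum>r = 0..i. real (i choose r) * b r j k)"
    unfolding b_def sum_distrib_left
    by (subst sum.swap) (simp add: algebra_simps)
  finally show ?thesis .
qed

lemma b_Suc_right_eq_sum: "b i (Suc j) k = (\<Sum>r = 0..<i. real (i choose r) * b r j k)"
  using b_Suc_right b_add_1[of i j k]
  by (simp add: atLeastLessThanSuc_atLeastAtMost[symmetric])

lemma b_eq_0_if_less: "i < j \<Longrightarrow> b i j k = 0"
proof (induction j arbitrary: i k)
  case 0
  then show ?case by simp
next
  case (Suc j)
  then show ?case
    unfolding b_Suc_right_eq_sum by (intro sum.neutral) auto
qed

lemma b_Suc_Suc: "b (Suc i) (Suc j) k = real (Suc j) * b i j (k + 1) + k * b i (Suc j) k"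
proof -
  have "b (Suc i) (Suc j) k
      = (\<Sum>r = 0..Suc j. real (Suc j choose r) * (-1) ^ (Suc j - r) * (real r + k) ^ i * real r)
        + k * b i (Suc j) k"
    unfolding b_def sum_distrib_left sum.distrib[symmetric]
    by (intro sum.cong) (simp_all add: algebra_simps)
  also have "(\<Sum>r = 0..Suc j. real (Suc j choose r) * (-1) ^ (Suc j - r) * (real r + k) ^ i * real r)
     = (\<Sum>r = 0..j. real (Suc j choose Suc r) * real (Suc r) * (-1) ^ (j - r) * (real r + (k + 1)) ^ i)"
    by (subst sum.atLeast0_atMost_Suc_shift) (simp add: algebra_simps)
  also have "\<dots> = real (Suc j) * b i j (k + 1)"
    unfolding b_def sum_distrib_left
  proof (intro sum.cong)
    show "real (Suc j choose Suc r) * real (Suc r) * (-1) ^ (j - r) * (real r + (k + 1)) ^ i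
        = real (Suc j) * (real (j choose r) * (-1) ^ (j - r) * (real r + (k + 1)) ^ i)" for r
      by (simp only: of_nat_mult[symmetric] Suc_times_binomial_eq[symmetric] mult.assoc)
        (simp add: algebra_simps)
  qed simp
  finally show ?thesis .
qed

lemma b_Suc_Suc_unroll:
  assumes "\<And>n. b (Suc n) (Suc j) k = c * b n (Suc j) k + real (Suc j) * f n"
    and "\<And>r. r < j \<Longrightarrow> f r = 0"
  shows "b (Suc i) (Suc j) k = real (Suc j) * (\<Sum>r = j..i. f r * c ^ (i - r))"
proof -
  have "b (Suc i) (Suc j) k = (\<Sum>r = 0..i. real (Suc j) * f r * c ^ (i - r))"
    using b_eq_0_if_less assms(1) by (rule sum_from_linear_recurrence) simp
  also have "\<dots> = real (Suc j) * (\<Sum>r = 0..i. f r * c ^ (i - r))"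
    by (simp add: sum_distrib_left mult.assoc)
  also have "\<dots> = real (Suc j) * (\<Sum>r = j..i. f r * c ^ (i - r))"
    using assms(2) by (simp add: sum_atLeast0_atMost_eq_from)
  finally show ?thesis .
qed

lemma b_Suc_Suc_eq_sum_powers_shifted:
  "b (Suc i) (Suc j) k = real (Suc j) * (\<Sum>r = j..i. b r j k * (real j + k + 1) ^ (i - r))"
proof (rule b_Suc_Suc_unroll)
  fix n
  have "b n j (k + 1) = b n (Suc j) k + b n j k"
    by (simp add: b_Suc_right)
  then show "b (Suc n) (Suc j) k = (real j + k + 1) * b n (Suc j) k + real (Suc j) * b n j k"
    using b_Suc_Suc[of n j k] by (simp only:) (simp add: algebra_simps)
qed (rule b_eq_0_if_less)

lemma b_Suc_Suc_eq_sum_powers: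
  "b (Suc i) (Suc j) k = real (Suc j) * (\<Sum>r = j..i. b r j (k + 1) * k ^ (i - r))"
proof (rule b_Suc_Suc_unroll)
  show "b (Suc n) (Suc j) k = k * b n (Suc j) k + real (Suc j) * b n j (k + 1)" for n
    using b_Suc_Suc[of n j k] by (simp add: algebra_simps)
qed (rule b_eq_0_if_less)

theorem mainTheorem7:
  fixes i j :: nat and k :: real
  shows "(b i (j + 1) k = (\<Sum>r = 0..<i. real (i choose r) * b r j k)) \<and>
         (b i j (k + 1) = (\<Sum>r = 0..i. real (i choose r) * b r j k)) \<and>
         (b (i + 1) (j + 1) k
           = real (j + 1) * (\<Sum>r = 0..i. real (i choose r) * b r j k) + k * b i (j + 1) k) \<and>
         (b (i + 1) (j + 1) k
           = real (j + 1) * (\<Sum>r = j..i. b r j k * (real j + k + 1) ^ (i - r))) \<and>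
         (b (i + 1) (j + 1) k
           = real (j + 1) * (\<Sum>r = j..i. b r j (k + 1) * k ^ (i - r)))"
  using b_Suc_right_eq_sum b_add_1 b_Suc_Suc b_Suc_Suc_eq_sum_powers_shifted b_Suc_Suc_eq_sum_powers
  by simp

end
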